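(* Let $\Delta=\Delta_0*\dots*\Delta_n$ be a regular filtered euclidean simplex ($\Delta_n\ne\emptyset$). Then the chain map $\mu^*_\Delta\colon N^*(\Delta)\to\widetilde N^*(\Delta)$ is injective and its image is exactly $\widetilde N^*_{\overline0}(\Delta)=\{\omega\in\widetilde N^*(\Delta)\mid\|\omega\|_\ell\le0\text{ and }\|d\omega\|_\ell\le0\text{ for all }\ell\in\{1,\dots,n\}\}$; hence $\mu^*_\Delta\colon N^*(\Delta)\to\widetilde N^*_{\overline0}(\Delta)$ is an isomorphism.
   Context: Coefficients in a commutative ring $R$. For an euclidean simplex $\Delta$, $N_*(\Delta),N^*(\Delta)$ are the simplicial chain and cochain complexes, ${\bf 1}_F$ the cochain dual to a face $F$. For a face $F$ of $\Delta$, $(F,0)$ denotes $F$ as a face of the cone $c\Delta=\Delta*[\mathtt v]$, $(F,1)$ denotes the face $cF$, and $(\emptyset,1)=[\mathtt v]$. For a filtered simplex $\Delta=\Delta_0*\dots*\Delta_n$ (join decomposition, some $\Delta_i$ possibly empty), $\widetilde N^*(\Delta)=N^*(c\Delta_0)\otimes\dots\otimes N^*(c\Delta_{n-1})\otimes N^*(\Delta_n)$ and $\widetilde N_*(\Delta)=N_*(c\Delta_0)\otimes\dots\otimes N_*(c\Delta_{n-1})\otimes N_*(\Delta_n)$, with bases ${\bf 1}_{(F,\varepsilon)}={\bf 1}_{(F_0,\varepsilon_0)}\otimes\dots\otimes{\bf 1}_{(F_{n-1},\varepsilon_{n-1})}\otimes{\bf 1}_{F_n}$ resp. $(F_0,\varepsilon_0)\otimes\dots\otimes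 F_n$ ($\varepsilon_i\in\{0,1\}$, $F_i$ a face of $\Delta_i$ or empty with $\varepsilon_i=1$, $\varepsilon_n=0$). For $\ell\in\{1,\dots,n\}$, $\|{\bf 1}_{(F,\varepsilon)}\|_\ell=-\infty$ if $\varepsilon_{n-\ell}=1$, and $=\sum_{i>n-\ell}(\dim F_i+\varepsilon_i)$ if $\varepsilon_{n-\ell}=0$ (with $\dim\emptyset=-1$); for $\omega=\sum_b\lambda_b{\bf 1}_{(F_b,\varepsilon_b)}$, $\lambda_b\ne0$, $\|\omega\|_\ell=\max_b\|{\bf 1}_{(F_b,\varepsilon_b)}\|_\ell$, and $\|0\|_\ell=-\infty$. The chain map $\mu^\Delta_*\colon\widetilde N_*(\Delta)\to N_*(\Delta)$ sends $(F_0,\varepsilon_0)\otimes\dots\otimes(F_{n-1},\varepsilon_{n-1})\otimes F_n$ to the face $F_0*\dots*F_\ell$ of $\Delta$, where $\ell$ is the least $j$ with $\varepsilon_j=0$, if $\sum_i(\dim F_i+\varepsilon_i)=\dim(F_0*\dots*F_\ell)$, and to $0$ otherwise; $\mu^*_\Delta$ is its dual. *)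

theory Defs
  imports Main "HOL-Library.Extended_Real"
begin

text \<open>A filtered euclidean simplex Delta = Delta_0 * ... * Delta_n is given by
  n and the numbers of vertices j i of Delta_i; the vertices of Delta_i are 0,...,j i - 1
  (Delta_i is empty iff j i = 0). Vertices of Delta are ordered lexicographically by
  (i, k). A face of Delta is a family G of vertex sets G i of Delta_i, not all empty.
  In the cone c Delta_i the cone vertex v is encoded as the number j i (the last vertex).
  A face (F, eps) of c Delta_i (or the vertex v = (empty,1)) is encoded by the nonempty set
  F union (if eps then {j i} else {}).\<close>

definition faces :: "nat \<Rightarrow> (nat \<Rightarrow> nat) \<Rightarrow> (nat \<Rightarrow> nat set) set" where
  "faces n j = {G. (\<forall>i\<le>n. G i \<subseteq> {..<j i}) \<and> (\<forall>i>n. G i = {}) \<and> (\<exists>i\<le>n. G i \<noteq> {})}"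

text \<open>Basis of the blown-up complex: tuples (F_0,eps_0) x ... x (F_{n-1},eps_{n-1}) x F_n.\<close>
definition tbasis :: "nat \<Rightarrow> (nat \<Rightarrow> nat) \<Rightarrow> (nat \<Rightarrow> nat set) set" where
  "tbasis n j = {b. (\<forall>i<n. b i \<subseteq> {..j i} \<and> b i \<noteq> {}) \<and> b n \<subseteq> {..<j n} \<and> b n \<noteq> {}
                    \<and> (\<forall>i>n. b i = {})}"

text \<open>Cochains = R-valued functions on the (finite) basis, i.e. linear forms.\<close>
definition cochN :: "nat \<Rightarrow> (nat \<Rightarrow> nat) \<Rightarrow> ((nat \<Rightarrow> nat set) \<Rightarrow> 'r::comm_ring_1) set" where
  "cochN n j = {\<omega>. \<forall>G. G \<notin> faces n j \<longrightarrow> \<omega> G = 0}"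

definition cochT :: "nat \<Rightarrow> (nat \<Rightarrow> nat) \<Rightarrow> ((nat \<Rightarrow> nat set) \<Rightarrow> 'r::comm_ring_1) set" where
  "cochT n j = {\<omega>. \<forall>b. b \<notin> tbasis n j \<longrightarrow> \<omega> b = 0}"

text \<open>Differential of the tensor product cochain complex: (d omega)(b) = omega(boundary b),
  where the boundary on the tensor product of simplicial chain complexes carries the Koszul
  sign (-1)^(sum of degrees of the preceding factors), and the simplicial boundary removes the
  vertex in position p with sign (-1)^p (faces of dimension 0 have boundary 0).\<close>
definition dT :: "nat \<Rightarrow> (nat \<Rightarrow> nat) \<Rightarrow> ((nat \<Rightarrow> nat set) \<Rightarrow> 'r::comm_ring_1)
                   \<Rightarrow> ((nat \<Rightarrow> nat set) \<Rightarrow> 'r)" where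
  "dT n j \<omega> = (\<lambda>b. if b \<in> tbasis n j then
      (\<Sum>i\<le>n. \<Sum>v\<in>b i. if 2 \<le> card (b i)
          then (-1) ^ ((\<Sum>k<i. card (b k) - 1) + card {u\<in>b i. u < v}) * \<omega> (b(i := b i - {v}))
          else 0)
      else 0)"

definition lvl :: "(nat \<Rightarrow> nat) \<Rightarrow> (nat \<Rightarrow> nat set) \<Rightarrow> nat" where
  "lvl j b = (LEAST i. j i \<notin> b i)"

definition muface :: "(nat \<Rightarrow> nat) \<Rightarrow> (nat \<Rightarrow> nat set) \<Rightarrow> (nat \<Rightarrow> nat set)" where
  "muface j b = (\<lambda>i. if i \<le> lvl j b then b i - {j i} else {})"

definition mu_ok :: "nat \<Rightarrow> (nat \<Rightarrow> nat) \<Rightarrow> (nat \<Rightarrow> nat set) \<Rightarrow> bool" where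
  "mu_ok n j b \<longleftrightarrow> (\<Sum>i\<le>n. int (card (b i)) - 1) = int (\<Sum>i\<le>n. card (muface j b i)) - 1"

definition muT :: "nat \<Rightarrow> (nat \<Rightarrow> nat) \<Rightarrow> ((nat \<Rightarrow> nat set) \<Rightarrow> 'r::comm_ring_1)
                   \<Rightarrow> ((nat \<Rightarrow> nat set) \<Rightarrow> 'r)" where
  "muT n j \<omega> = (\<lambda>b. if b \<in> tbasis n j \<and> mu_ok n j b then \<omega> (muface j b) else 0)"

text \<open>Perversity norms ||.||_l with values in the extended reals (-infinity = bot).\<close>
definition bnorm :: "nat \<Rightarrow> (nat \<Rightarrow> nat) \<Rightarrow> nat \<Rightarrow> (nat \<Rightarrow> nat set) \<Rightarrow> ereal" where
  "bnorm n j l b = (if j (n - l) \<in> b (n - l) then -\<infinity>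
                    else ereal (real_of_int (\<Sum>i\<in>{n - l<..n}. int (card (b i)) - 1)))"

definition tnorm :: "nat \<Rightarrow> (nat \<Rightarrow> nat) \<Rightarrow> nat \<Rightarrow> ((nat \<Rightarrow> nat set) \<Rightarrow> 'r::comm_ring_1) \<Rightarrow> ereal" where
  "tnorm n j l \<omega> = Sup (bnorm n j l ` {b. \<omega> b \<noteq> 0})"

definition tilde0 :: "nat \<Rightarrow> (nat \<Rightarrow> nat) \<Rightarrow> ((nat \<Rightarrow> nat set) \<Rightarrow> 'r::comm_ring_1) set" where
  "tilde0 n j = {\<omega> \<in> cochT n j. \<forall>l\<in>{1..n}. tnorm n j l \<omega> \<le> 0 \<and> tnorm n j l (dT n j \<omega>) \<le> 0}"

end

theory Submission
  imports Defs
begin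

text \<open>
  Call a basis element b of the blown-up complex admissible if every factor after lvl j b, the
  first factor not containing its cone vertex, is a single vertex. The map mu_* kills exactly
  the inadmissible elements, and these are also exactly the elements with some norm \<open>> 0\<close>.
  Hence the conditions defining the complex of perversity 0 say that \<omega> and d\<omega> vanish on
  inadmissible elements. For \<omega> = mu^* \<eta> this holds because an inadmissible element c has
  a factor i after lvl j c with at least two vertices: its faces are inadmissible, except, when
  that factor is a doubleton {u, w}, the two faces keeping u resp. w, which have the same
  image under mu_* and cancel in the boundary. Conversely the same computation of d\<omega> at such
  an element shows that \<omega> does not change when one vertex factor after the level is
  replaced by another, so \<omega> is constant on the fibres of mu_* over faces of \<Delta>. Since every
  face is hit (this uses \<Delta>_n \<noteq> \<emptyset>), \<omega> = mu^* \<eta> for a unique \<eta>.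
\<close>

lemma tbasis_subset_atMost: "b \<in> tbasis n j \<Longrightarrow> b i \<subseteq> {..j i}"
  unfolding tbasis_def by (cases i n rule: linorder_cases) auto

lemma tbasis_finite: "b \<in> tbasis n j \<Longrightarrow> finite (b i)"
  by (rule finite_subset[OF tbasis_subset_atMost]) simp_all

lemma tbasis_nonempty: "b \<in> tbasis n j \<Longrightarrow> i \<le> n \<Longrightarrow> b i \<noteq> {}"
  unfolding tbasis_def by (cases "i = n") auto

lemma tbasis_card_ge_1: "b \<in> tbasis n j \<Longrightarrow> i \<le> n \<Longrightarrow> 1 \<le> card (b i)"
  using tbasis_finite tbasis_nonempty by (simp add: Suc_le_eq card_gt_0_iff)

lemma tbasis_last_subset: "b \<in> tbasis n j \<Longrightarrow> b n \<subseteq> {..<j n}"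
  unfolding tbasis_def by blast

lemma tbasis_empty_above: "b \<in> tbasis n j \<Longrightarrow> n < i \<Longrightarrow> b i = {}"
  unfolding tbasis_def by blast

lemma tbasis_upd:
  assumes b: "b \<in> tbasis n j" and "i \<le> n" "X \<noteq> {}"
    and X: "X \<subseteq> b i \<union> b' i" and b': "b' \<in> tbasis n j"
  shows "b(i := X) \<in> tbasis n j"
proof -
  have "X \<subseteq> {..j i}"
    using X tbasis_subset_atMost[OF b] tbasis_subset_atMost[OF b'] by blast
  moreover have "X \<subseteq> {..<j i}" if "i = n"
    using X that tbasis_last_subset[OF b] tbasis_last_subset[OF b'] by blast
  ultimately show ?thesis
    using b \<open>i \<le> n\<close> \<open>X \<noteq> {}\<close> unfolding tbasis_def by auto
qed

lemma tbasis_remove: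
  assumes "b \<in> tbasis n j" "k \<le> n" "2 \<le> card (b k)"
  shows "b(k := b k - {v}) \<in> tbasis n j"
proof (rule tbasis_upd[OF assms(1,2) _ _ assms(1)])
  show "b k - {v} \<noteq> {}"
  proof
    assume "b k - {v} = {}"
    then have "card (b k) \<le> card {v}" by (intro card_mono) auto
    then show False using assms(3) by simp
  qed
qed auto

lemma lvl_props:
  assumes "b \<in> tbasis n j"
  shows lvl_le_n: "lvl j b \<le> n"
    and cone_vertex_notin_lvl: "j (lvl j b) \<notin> b (lvl j b)"
    and cone_vertex_below_lvl: "i < lvl j b \<Longrightarrow> j i \<in> b i"
proof -
  have jn: "j n \<notin> b n" using assms unfolding tbasis_def by auto
  show "lvl j b \<le> n" unfolding lvl_def by (rule Least_le) (rule jn)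
  show "j (lvl j b) \<notin> b (lvl j b)" unfolding lvl_def by (rule LeastI) (rule jn)
  show "i < lvl j b \<Longrightarrow> j i \<in> b i" unfolding lvl_def using not_less_Least by blast
qed

lemma lvl_le: "j m \<notin> b m \<Longrightarrow> lvl j b \<le> m"
  unfolding lvl_def by (rule Least_le)

lemma lvl_cong:
  assumes "b \<in> tbasis n j" "\<And>i. i \<le> lvl j b \<Longrightarrow> b' i = b i"
  shows "lvl j b' = lvl j b"
  unfolding lvl_def[of j b']
proof (rule Least_equality)
  show "j (lvl j b) \<notin> b' (lvl j b)" using cone_vertex_notin_lvl[OF assms(1)] assms(2) by simp
  fix y assume "j y \<notin> b' y"
  then show "lvl j b \<le> y" using cone_vertex_below_lvl[OF assms(1)] assms(2) by (metis le_less_linear less_imp_le)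
qed

lemma lvl_mono:
  assumes "b \<in> tbasis n j" "\<And>i. b' i \<subseteq> b i"
  shows "lvl j b' \<le> lvl j b"
  using cone_vertex_notin_lvl[OF assms(1)] assms(2) by (meson lvl_le subsetD)

lemma mu_ok_iff_singletons_above_lvl:
  assumes b: "b \<in> tbasis n j"
  shows "mu_ok n j b \<longleftrightarrow> (\<forall>i\<in>{lvl j b<..n}. card (b i) = 1)"
proof -
  define L where "L = lvl j b"
  have card_muface: "int (card (muface j b i)) = (int (card (b i)) - 1) + (if i = L then 1 else 0)
      - (if L < i then int (card (b i)) - 1 else 0)" if "i \<le> n" for i
  proof -
    consider "i < L" | "i = L" | "L < i" by linarith
    then show ?thesis
    proof cases
      case 1
      then have "muface j b i = b i - {j i}" unfolding muface_def L_def by simp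
      moreover have "j i \<in> b i" using cone_vertex_below_lvl[OF b] 1 unfolding L_def .
      ultimately show ?thesis
        using 1 tbasis_finite[OF b] tbasis_card_ge_1[OF b that] by simp
    next
      case 2
      then show ?thesis using cone_vertex_notin_lvl[OF b] unfolding muface_def L_def by simp
    qed (simp add: muface_def L_def)
  qed
  define T where "T = (\<Sum>i\<in>{L<..n}. int (card (b i)) - 1)"
  have "{i \<in> {..n}. L < i} = {L<..n}" by auto
  then have "(\<Sum>i\<le>n. if L < i then int (card (b i)) - 1 else 0) = T"
    unfolding T_def by (simp add: sum.inter_filter[symmetric])
  moreover have "(\<Sum>i\<le>n. if i = L then 1 else 0) = (1::int)"
    using lvl_le_n[OF b] by (simp add: L_def)
  ultimately have "int (\<Sum>i\<le>n. card (muface j b i)) = (\<Sum>i\<le>n. int (card (b i)) - 1) + 1 - T"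
    by (simp add: card_muface sum.distrib sum_subtractf)
  then have "mu_ok n j b \<longleftrightarrow> T = 0" unfolding mu_ok_def by linarith
  also have "\<dots> \<longleftrightarrow> (\<forall>i\<in>{L<..n}. card (b i) = 1)"
    unfolding T_def using tbasis_card_ge_1[OF b] by (subst sum_nonneg_eq_0_iff) force+
  finally show ?thesis unfolding L_def .
qed

lemma muT_cong:
  assumes "b \<in> tbasis n j" "b' \<in> tbasis n j" "\<And>i. i \<le> lvl j b \<Longrightarrow> b' i = b i"
    "\<And>i. i \<le> n \<Longrightarrow> card (b' i) = card (b i)"
  shows "muT n j \<omega> b' = muT n j \<omega> b"
proof -
  have L: "lvl j b' = lvl j b" by (rule lvl_cong[OF assms(1,3)])
  have M: "muface j b' = muface j b" unfolding muface_def L using assms(3) by (intro ext) auto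
  have "mu_ok n j b' = mu_ok n j b" unfolding mu_ok_def M using assms(4) by simp
  then show ?thesis unfolding muT_def M using assms(1,2) by simp
qed

lemma bnorm_nonpos_iff:
  assumes b: "b \<in> tbasis n j"
  shows "bnorm n j l b \<le> 0 \<longleftrightarrow> j (n - l) \<in> b (n - l) \<or> (\<forall>i\<in>{n - l<..n}. card (b i) = 1)"
proof -
  have nonneg: "\<forall>i\<in>{n - l<..n}. 0 \<le> int (card (b i)) - 1"
    using tbasis_card_ge_1[OF b] by force
  have "0 \<le> (\<Sum>i\<in>{n - l<..n}. int (card (b i)) - 1)" by (rule sum_nonneg) (use nonneg in blast)
  moreover have "(\<Sum>i\<in>{n - l<..n}. int (card (b i)) - 1) = 0 \<longleftrightarrow>
      (\<forall>i\<in>{n - l<..n}. int (card (b i)) - 1 = 0)"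
    by (rule sum_nonneg_eq_0_iff) (use nonneg in auto)
  moreover have "bnorm n j l b \<le> 0 \<longleftrightarrow>
      j (n - l) \<in> b (n - l) \<or> (\<Sum>i\<in>{n - l<..n}. int (card (b i)) - 1) \<le> 0"
    unfolding bnorm_def by (simp del: of_int_sum of_int_diff)
  ultimately show ?thesis by auto
qed

lemma mu_ok_iff_bnorm_nonpos:
  assumes b: "b \<in> tbasis n j"
  shows "mu_ok n j b \<longleftrightarrow> (\<forall>l\<in>{1..n}. bnorm n j l b \<le> 0)"
  unfolding mu_ok_iff_singletons_above_lvl[OF b] bnorm_nonpos_iff[OF b]
proof (intro iffI ballI)
  fix l assume "\<forall>i\<in>{lvl j b<..n}. card (b i) = 1"
  moreover have "lvl j b \<le> n - l" if "j (n - l) \<notin> b (n - l)" using that by (rule lvl_le)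
  ultimately show "j (n - l) \<in> b (n - l) \<or> (\<forall>i\<in>{n - l<..n}. card (b i) = 1)" by force
next
  fix i assume A: "\<forall>l\<in>{1..n}. j (n - l) \<in> b (n - l) \<or> (\<forall>i\<in>{n - l<..n}. card (b i) = 1)"
    and i: "i \<in> {lvl j b<..n}"
  then have "n - lvl j b \<in> {1..n}" "n - (n - lvl j b) = lvl j b" using lvl_le_n[OF b] by auto
  then show "card (b i) = 1" using A cone_vertex_notin_lvl[OF b] i by metis
qed

lemma tnorm_nonpos_iff: "tnorm n j l f \<le> 0 \<longleftrightarrow> (\<forall>b. f b \<noteq> 0 \<longrightarrow> bnorm n j l b \<le> 0)"
  unfolding tnorm_def by (auto simp: Sup_le_iff)

lemma tilde0_iff:
  "\<omega> \<in> tilde0 n j \<longleftrightarrow>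
     \<omega> \<in> cochT n j \<and> (\<forall>b\<in>tbasis n j. \<not> mu_ok n j b \<longrightarrow> \<omega> b = 0 \<and> dT n j \<omega> b = 0)"
proof -
  have norms: "(\<forall>l\<in>{1..n}. tnorm n j l f \<le> 0) \<longleftrightarrow> (\<forall>b\<in>tbasis n j. \<not> mu_ok n j b \<longrightarrow> f b = 0)"
    if "\<And>b. b \<notin> tbasis n j \<Longrightarrow> f b = 0" for f :: "(nat \<Rightarrow> nat set) \<Rightarrow> 'a::comm_ring_1"
    using that mu_ok_iff_bnorm_nonpos unfolding tnorm_nonpos_iff by blast
  have "\<And>b. b \<notin> tbasis n j \<Longrightarrow> dT n j \<omega> b = 0" unfolding dT_def by simp
  then show ?thesis
    unfolding tilde0_def using norms[of \<omega>] norms[of "dT n j \<omega>"] by (auto simp: cochT_def)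
qed

lemma dT_eq_0_if_faces_vanish:
  assumes "\<And>k v. k \<le> n \<Longrightarrow> v \<in> c k \<Longrightarrow> 2 \<le> card (c k) \<Longrightarrow> f (c(k := c k - {v})) = 0"
  shows "dT n j f c = 0"
  unfolding dT_def using assms by (auto intro!: sum.neutral)

lemma dT_eq_single_factor:
  assumes c: "c \<in> tbasis n j" and i: "i \<le> n"
    and Z: "\<And>k v. k \<le> n \<Longrightarrow> k \<noteq> i \<Longrightarrow> v \<in> c k \<Longrightarrow> 2 \<le> card (c k) \<Longrightarrow> f (c(k := c k - {v})) = 0"
  shows "dT n j f c = (-1) ^ (\<Sum>k<i. card (c k) - 1) *
     (\<Sum>v\<in>c i. if 2 \<le> card (c i) then (-1) ^ card {u\<in>c i. u < v} * f (c(i := c i - {v})) else 0)"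
proof -
  define g where "g k = (\<Sum>v\<in>c k. if 2 \<le> card (c k)
          then (-1) ^ ((\<Sum>k'<k. card (c k') - 1) + card {u\<in>c k. u < v}) * f (c(k := c k - {v}))
          else 0)" for k
  have "dT n j f c = (\<Sum>k\<le>n. g k)" unfolding dT_def g_def using c by simp
  also have "\<dots> = g i + (\<Sum>k\<in>{..n} - {i}. g k)" using i by (subst sum.remove[of _ i]) auto
  also have "(\<Sum>k\<in>{..n} - {i}. g k) = 0"
    unfolding g_def by (intro sum.neutral ballI) (auto simp: Z)
  also have "g i = (-1) ^ (\<Sum>k<i. card (c k) - 1) *
     (\<Sum>v\<in>c i. if 2 \<le> card (c i) then (-1) ^ card {u\<in>c i. u < v} * f (c(i := c i - {v})) else 0)"
    unfolding g_def sum_distrib_left by (intro sum.cong) (auto simp: power_add)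
  finally show ?thesis by simp
qed

lemma alternating_sum_doubleton_eq_0_iff:
  fixes g :: "nat \<Rightarrow> 'r::comm_ring_1"
  assumes "u \<noteq> w"
  shows "(\<Sum>v\<in>{u, w}. (-1) ^ card {x\<in>{u, w}. x < v} * g v) = 0 \<longleftrightarrow> g u = g w"
proof -
  have S: "(\<Sum>v\<in>{u, w}. (-1) ^ card {x\<in>{u, w}. x < v} * g v) =
     (-1) ^ card {x\<in>{u, w}. x < u} * g u + (-1) ^ card {x\<in>{u, w}. x < w} * g w"
    using assms by (subst sum.insert) auto
  show ?thesis
  proof (cases "u < w")
    case True
    then have E: "{x\<in>{u, w}. x < u} = {}" "{x\<in>{u, w}. x < w} = {u}" by auto
    show ?thesis unfolding S E by (simp add: eq_neg_iff_add_eq_0[symmetric])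
  next
    case False
    then have E: "{x\<in>{u, w}. x < u} = {w}" "{x\<in>{u, w}. x < w} = {}" using assms by auto
    show ?thesis unfolding S E by (auto simp: add.commute eq_neg_iff_add_eq_0[symmetric])
  qed
qed

lemma dT_doubleton_eq_0_iff:
  assumes c: "c \<in> tbasis n j" and i: "i \<le> n" and uw: "c i = {u, w}" "u \<noteq> w"
    and Z: "\<And>k v. k \<le> n \<Longrightarrow> k \<noteq> i \<Longrightarrow> v \<in> c k \<Longrightarrow> 2 \<le> card (c k) \<Longrightarrow> f (c(k := c k - {v})) = 0"
  shows "dT n j f c = 0 \<longleftrightarrow> f (c(i := {u})) = f (c(i := {w}))"
proof -
  define S where "S = (\<Sum>v\<in>{u, w}. (-1) ^ card {x\<in>{u, w}. x < v} * f (c(i := {u, w} - {v})))"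
  define \<sigma> :: 'a where "\<sigma> = (-1) ^ (\<Sum>k<i. card (c k) - 1)"
  have "dT n j f c = \<sigma> *
     (\<Sum>v\<in>c i. if 2 \<le> card (c i) then (-1) ^ card {x\<in>c i. x < v} * f (c(i := c i - {v})) else 0)"
    unfolding \<sigma>_def by (rule dT_eq_single_factor[OF c i]) (rule Z)
  then have "dT n j f c = \<sigma> * S" unfolding S_def uw using uw(2) by simp
  moreover have "\<sigma> * (\<sigma> * S) = S" unfolding \<sigma>_def by simp
  ultimately have "dT n j f c = 0 \<longleftrightarrow> S = 0" by force
  also have "\<dots> \<longleftrightarrow> f (c(i := {w})) = f (c(i := {u}))"
    unfolding S_def alternating_sum_doubleton_eq_0_iff[OF uw(2)] using uw(2) by (simp add: insert_Diff_if)
  finally show ?thesis by auto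
qed

lemma not_mu_ok_if_subset:
  assumes "b \<in> tbasis n j" "b' \<in> tbasis n j" "\<And>i. b' i \<subseteq> b i"
    and "lvl j b < i" "i \<le> n" "card (b' i) \<noteq> 1"
  shows "\<not> mu_ok n j b'"
  using lvl_mono[OF assms(1,3)] mu_ok_iff_singletons_above_lvl[OF assms(2)] assms(4-6) by auto

lemma muT_in_tilde0: "muT n j \<omega> \<in> tilde0 n j"
proof -
  have "dT n j (muT n j \<omega>) b = 0" if b: "b \<in> tbasis n j" and "\<not> mu_ok n j b" for b
  proof -
    have "\<exists>i\<in>{lvl j b<..n}. card (b i) \<noteq> 1"
      using \<open>\<not> mu_ok n j b\<close> mu_ok_iff_singletons_above_lvl[OF b] by simp
    then obtain i where i: "lvl j b < i" "i \<le> n" "card (b i) \<noteq> 1" by auto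
    then have two: "2 \<le> card (b i)" using tbasis_card_ge_1[OF b i(2)] by linarith
    have face_vanishes: "muT n j \<omega> (b(k := b k - {v})) = 0"
      if k: "k \<le> n" "v \<in> b k" "2 \<le> card (b k)" and "k \<noteq> i \<or> card (b i) \<noteq> 2" for k v
    proof -
      have face: "b(k := b k - {v}) \<in> tbasis n j" by (rule tbasis_remove[OF b k(1,3)])
      have "card ((b(k := b k - {v})) i) \<noteq> 1"
      proof (cases "k = i")
        case True
        then have "card ((b(k := b k - {v})) i) = card (b i) - 1" using k(2) tbasis_finite[OF b] by simp
        then show ?thesis using True two \<open>k \<noteq> i \<or> card (b i) \<noteq> 2\<close> by linarith
      qed (use i(3) in simp)
      then have "\<not> mu_ok n j (b(k := b k - {v}))"
        by (intro not_mu_ok_if_subset[OF b face _ i(1,2)]) auto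
      then show ?thesis unfolding muT_def by simp
    qed
    show ?thesis
    proof (cases "card (b i) = 2")
      case True
      then obtain u w where uw: "b i = {u, w}" "u \<noteq> w" by (meson card_2_iff)
      have bu: "b(i := {u}) \<in> tbasis n j" and bw: "b(i := {w}) \<in> tbasis n j"
        using tbasis_remove[OF b i(2) two, of w] tbasis_remove[OF b i(2) two, of u] uw
        by (simp_all add: insert_Diff_if)
      have "lvl j (b(i := {w})) = lvl j b" by (rule lvl_cong[OF b]) (use i in auto)
      then have "muT n j \<omega> (b(i := {u})) = muT n j \<omega> (b(i := {w}))"
        by (intro muT_cong[OF bw bu]) (use i in auto)
      then show ?thesis using face_vanishes by (subst dT_doubleton_eq_0_iff[OF b i(2) uw]) auto
    next
      case False
      then show ?thesis using face_vanishes by (intro dT_eq_0_if_faces_vanish) auto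
    qed
  qed
  then show ?thesis unfolding tilde0_iff by (auto simp: cochT_def muT_def)
qed

lemma tilde0_swap_singleton:
  assumes \<omega>: "\<omega> \<in> tilde0 n j" and b: "b \<in> tbasis n j" and i: "lvl j b < i" "i \<le> n"
    and u: "b i = {u}" and bw: "b(i := {w}) \<in> tbasis n j" and uw: "u \<noteq> w"
  shows "\<omega> (b(i := {w})) = \<omega> b"
proof -
  define c where "c = b(i := {u, w})"
  have c: "c \<in> tbasis n j" unfolding c_def by (rule tbasis_upd[OF b i(2) _ _ bw]) (use u in auto)
  have lvl_c: "lvl j c = lvl j b" unfolding c_def by (rule lvl_cong[OF b]) (use i in auto)
  have ci: "c i = {u, w}" "card (c i) = 2" unfolding c_def using uw by auto
  have "\<not> mu_ok n j c" using mu_ok_iff_singletons_above_lvl[OF c] lvl_c i ci(2) by auto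
  then have "dT n j \<omega> c = 0" using \<omega> c unfolding tilde0_iff by blast
  moreover have "\<omega> (c(k := c k - {v})) = 0"
    if "k \<le> n" "k \<noteq> i" "v \<in> c k" "2 \<le> card (c k)" for k v
  proof -
    have face: "c(k := c k - {v}) \<in> tbasis n j" by (rule tbasis_remove[OF c that(1,4)])
    have "\<not> mu_ok n j (c(k := c k - {v}))"
      by (rule not_mu_ok_if_subset[OF c face _ _ i(2)]) (use that ci lvl_c i in auto)
    then show ?thesis using \<omega> face unfolding tilde0_iff by blast
  qed
  ultimately have "\<omega> (c(i := {u})) = \<omega> (c(i := {w}))"
    using dT_doubleton_eq_0_iff[OF c i(2) ci(1) uw] by blast
  moreover have "c(i := {u}) = b" "c(i := {w}) = b(i := {w})" unfolding c_def using u by (auto simp flip: u)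
  ultimately show ?thesis by simp
qed

lemma tilde0_eq_if_agree_to_lvl:
  assumes \<omega>: "\<omega> \<in> tilde0 n j"
  shows "b \<in> tbasis n j \<Longrightarrow> b' \<in> tbasis n j \<Longrightarrow> mu_ok n j b \<Longrightarrow> mu_ok n j b'
    \<Longrightarrow> (\<And>i. i \<le> lvl j b \<Longrightarrow> b' i = b i) \<Longrightarrow> \<omega> b' = \<omega> b"
proof (induction "card {i\<in>{..n}. b i \<noteq> b' i}" arbitrary: b rule: less_induct)
  case less
  note b = less.prems(1) and b' = less.prems(2)
  show ?case
  proof (cases "\<exists>i\<le>n. b i \<noteq> b' i")
    case False
    have "b' k = b k" for k
      using False tbasis_empty_above[OF b, of k] tbasis_empty_above[OF b', of k] by (cases "k \<le> n") auto
    then show ?thesis by (metis ext)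
  next
    case True
    then obtain i where i: "i \<le> n" "b i \<noteq> b' i" by blast
    have il: "lvl j b < i" by (rule ccontr) (use i(2) less.prems(5)[of i] in auto)
    have "card (b i) = 1"
      using mu_ok_iff_singletons_above_lvl[OF b] less.prems(3) il i(1) by simp
    moreover have "card (b' i) = 1"
      using mu_ok_iff_singletons_above_lvl[OF b'] less.prems(4) lvl_cong[OF b less.prems(5)] il i(1)
      by simp
    ultimately obtain u w where u: "b i = {u}" and w: "b' i = {w}" by (meson card_1_singletonE)
    define b'' where "b'' = b(i := {w})"
    have b'': "b'' \<in> tbasis n j" unfolding b''_def by (rule tbasis_upd[OF b i(1) _ _ b']) (use w in auto)
    have lvl_b'': "lvl j b'' = lvl j b" unfolding b''_def by (rule lvl_cong[OF b]) (use il in auto)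
    have "\<omega> b'' = \<omega> b" unfolding b''_def
      by (rule tilde0_swap_singleton[OF \<omega> b il i(1) u]) (use b'' b''_def i u w in auto)
    moreover have "\<omega> b' = \<omega> b''"
    proof (rule less.hyps[OF _ b'' b'])
      have D: "{k\<in>{..n}. b'' k \<noteq> b' k} = {k\<in>{..n}. b k \<noteq> b' k} - {i}"
        unfolding b''_def using w by auto
      show "card {k\<in>{..n}. b'' k \<noteq> b' k} < card {k\<in>{..n}. b k \<noteq> b' k}"
        unfolding D by (rule card_Diff1_less) (use i in auto)
      show "mu_ok n j b''" unfolding mu_ok_iff_singletons_above_lvl[OF b''] lvl_b''
        using mu_ok_iff_singletons_above_lvl[OF b] less.prems(3) by (auto simp: b''_def)
      show "b' k = b'' k" if "k \<le> lvl j b''" for k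
        using less.prems(5) that lvl_b'' il unfolding b''_def by auto
    qed (rule less.prems(4))
    ultimately show ?thesis by simp
  qed
qed

lemma muface_in_faces:
  assumes b: "b \<in> tbasis n j"
  shows "muface j b \<in> faces n j"
proof -
  have "muface j b i \<subseteq> {..<j i}" for i
    using tbasis_subset_atMost[OF b, of i] unfolding muface_def by auto
  moreover have "muface j b i = {}" if "n < i" for i
    using that lvl_le_n[OF b] unfolding muface_def by simp
  moreover have "muface j b (lvl j b) \<noteq> {}"
    using cone_vertex_notin_lvl[OF b] tbasis_nonempty[OF b lvl_le_n[OF b]] unfolding muface_def by simp
  ultimately show ?thesis unfolding faces_def using lvl_le_n[OF b] by blast
qed

lemma muface_eq_imp_agree_to_lvl:
  assumes b: "b \<in> tbasis n j" and b': "b' \<in> tbasis n j" and eq: "muface j b' = muface j b"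
    and "i \<le> lvl j b"
  shows "b' i = b i"
proof -
  have top: "muface j c (lvl j c) = c (lvl j c)" "\<forall>i>lvl j c. muface j c i = {}"
    if "c \<in> tbasis n j" for c
    using cone_vertex_notin_lvl[OF that] unfolding muface_def by auto
  have "lvl j b' = lvl j b"
    using top[OF b] top[OF b'] tbasis_nonempty[OF b lvl_le_n[OF b]] tbasis_nonempty[OF b' lvl_le_n[OF b']]
      eq by (metis linorder_neqE_nat)
  then show ?thesis
  proof (cases "i < lvl j b")
    case True
    then have "b i = muface j b i \<union> {j i}" "b' i = muface j b' i \<union> {j i}"
      using cone_vertex_below_lvl[OF b] cone_vertex_below_lvl[OF b'] \<open>lvl j b' = lvl j b\<close>
      unfolding muface_def by auto
    then show ?thesis using eq by simp
  next
    case False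
    then show ?thesis using top[OF b] top[OF b'] \<open>lvl j b' = lvl j b\<close> \<open>i \<le> lvl j b\<close> eq by simp
  qed
qed

lemma muface_surj:
  assumes jn: "0 < j n" and G: "G \<in> faces n j"
  obtains b where "b \<in> tbasis n j" "mu_ok n j b" "muface j b = G"
proof -
  define I where "I = {i. i \<le> n \<and> G i \<noteq> {}}"
  have "finite I" "I \<noteq> {}" using G unfolding I_def faces_def by auto
  define t where "t = Max I"
  have t: "t \<le> n" "G t \<noteq> {}" using Max_in[OF \<open>finite I\<close> \<open>I \<noteq> {}\<close>] unfolding t_def I_def by auto
  have above_t: "G i = {}" if "t < i" for i
  proof (cases "i \<le> n")
    case True
    show ?thesis
    proof (rule ccontr)
      assume "G i \<noteq> {}"
      then have "i \<le> t" unfolding t_def using Max_ge[OF \<open>finite I\<close>] True I_def by blast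
      then show False using that by simp
    qed
  qed (use G in \<open>auto simp: faces_def\<close>)
  have G_sub: "\<And>i. i \<le> n \<Longrightarrow> G i \<subseteq> {..<j i}" using G unfolding faces_def by auto
  \<comment> \<open>cone vertices below the last nonempty factor t of G, one vertex in each later factor\<close>
  define b where "b i = (if i < t then G i \<union> {j i} else if i = t then G i
      else if i < n then {j i} else if i = n then {0} else {})" for i
  have b: "b \<in> tbasis n j" unfolding tbasis_def
  proof (intro CollectI conjI allI impI)
    fix i assume "i < n"
    then show "b i \<subseteq> {..j i}" "b i \<noteq> {}" unfolding b_def using G_sub[of i] t by auto
  next
    show "b n \<subseteq> {..<j n}" "b n \<noteq> {}" unfolding b_def using G_sub[of n] t jn by auto
  next
    fix i assume "n < i" then show "b i = {}" unfolding b_def using t by auto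
  qed
  have lvl_b: "lvl j b = t" unfolding lvl_def
  proof (rule Least_equality)
    show "j t \<notin> b t" unfolding b_def using G_sub[OF t(1)] by auto
    show "t \<le> y" if "j y \<notin> b y" for y using that unfolding b_def by (cases "y < t") auto
  qed
  have "mu_ok n j b" unfolding mu_ok_iff_singletons_above_lvl[OF b] lvl_b b_def by auto
  moreover have "muface j b i = G i" for i
  proof (cases "i \<le> t")
    case True
    then have "j i \<notin> G i" using G_sub[of i] t(1) by auto
    then show ?thesis unfolding muface_def lvl_b b_def using True by auto
  qed (simp add: muface_def lvl_b above_t)
  ultimately show ?thesis using b that by blast
qed

lemma inj_on_muT:
  assumes "0 < j n"
  shows "inj_on (muT n j) (cochN n j)"
proof (rule inj_onI)
  fix \<omega> \<omega>' assume \<omega>: "\<omega> \<in> cochN n j" "\<omega>' \<in> cochN n j" and eq: "muT n j \<omega> = muT n j \<omega>'"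
  show "\<omega> = \<omega>'"
  proof
    fix G show "\<omega> G = \<omega>' G"
    proof (cases "G \<in> faces n j")
      case True
      then obtain b where b: "b \<in> tbasis n j" "mu_ok n j b" "muface j b = G"
        by (rule muface_surj[of j n, OF assms])
      then show ?thesis using fun_cong[OF eq, of b] unfolding muT_def by simp
    qed (use \<omega> in \<open>simp add: cochN_def\<close>)
  qed
qed

lemma tilde0_subset_muT_image:
  assumes "0 < j n"
  shows "tilde0 n j \<subseteq> muT n j ` cochN n j"
proof
  fix \<omega> :: "(nat \<Rightarrow> nat set) \<Rightarrow> 'a" assume \<omega>: "\<omega> \<in> tilde0 n j"
  have "\<forall>G\<in>faces n j. \<exists>b. b \<in> tbasis n j \<and> mu_ok n j b \<and> muface j b = G"
    using muface_surj[of j n, OF assms] by metis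
  then obtain lift
    where lift: "\<And>G. G \<in> faces n j \<Longrightarrow> lift G \<in> tbasis n j \<and> mu_ok n j (lift G) \<and> muface j (lift G) = G"
    using bchoice[of "faces n j" "\<lambda>G b. b \<in> tbasis n j \<and> mu_ok n j b \<and> muface j b = G"] by auto
  define \<eta> where "\<eta> G = (if G \<in> faces n j then \<omega> (lift G) else 0)" for G
  have "muT n j \<eta> b = \<omega> b" for b
  proof (cases "b \<in> tbasis n j \<and> mu_ok n j b")
    case True
    then have F: "muface j b \<in> faces n j" by (simp add: muface_in_faces)
    then have lift_b: "lift (muface j b) \<in> tbasis n j" "mu_ok n j (lift (muface j b))"
      "muface j (lift (muface j b)) = muface j b"
      using lift by auto
    have "\<omega> (lift (muface j b)) = \<omega> b"
    proof (rule tilde0_eq_if_agree_to_lvl[OF \<omega>])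
      show "lift (muface j b) i = b i" if "i \<le> lvl j b" for i
        using muface_eq_imp_agree_to_lvl[OF _ lift_b(1) lift_b(3) that] True by blast
    qed (use True lift_b in auto)
    then show ?thesis unfolding muT_def \<eta>_def using True F by simp
  next
    case False
    then have "\<omega> b = 0" using \<omega> unfolding tilde0_iff cochT_def by blast
    then show ?thesis unfolding muT_def using False by auto
  qed
  moreover have "\<eta> \<in> cochN n j" unfolding cochN_def \<eta>_def by simp
  ultimately show "\<omega> \<in> muT n j ` cochN n j" by (intro image_eqI[where x = \<eta>] ext) simp_all
qed

theorem mainTheorem3:
  fixes n :: nat and j :: "nat \<Rightarrow> nat"
  assumes "0 < j n"
  shows "inj_on (muT n j :: ((nat \<Rightarrow> nat set) \<Rightarrow> 'r::comm_ring_1) \<Rightarrow> _) (cochN n j)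
         \<and> muT n j ` cochN n j = (tilde0 n j :: ((nat \<Rightarrow> nat set) \<Rightarrow> 'r) set)"
proof
  show "muT n j ` cochN n j = (tilde0 n j :: ((nat \<Rightarrow> nat set) \<Rightarrow> 'r) set)"
    using tilde0_subset_muT_image[of j n, OF assms] muT_in_tilde0 by (intro equalityI image_subsetI) auto
qed (rule inj_on_muT[of j n, OF assms])

end
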